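(* Let $0<\alpha<1$, and for $0<t<1$ let $T_t$ be the weighted composition operator $T_t(f)(z)=\frac{1}{(t-1)z+1}\,f\!\left(\frac{t}{(t-1)z+1}\right)$, $z\in\mathbb D$, acting on $H^\infty_\alpha$. Put $$x_0=\frac{\alpha+2\alpha t-t-\sqrt{4\alpha^2t-2\alpha t+\alpha^2-2\alpha+1}}{2\alpha-1}.$$ Then $$\|T_t\|_{H^\infty_\alpha\to H^\infty_\alpha}=\begin{cases}\dfrac{t^{\alpha-1}}{(1-t)^\alpha} & \text{if } 0<\alpha\le 2/3,\ 0<t<1,\ \text{or if } 2/3<\alpha<1,\ \frac{3\alpha-2}{4\alpha-2}\le t<1,\\[2mm] (1-x_0)^{2\alpha-1}\left(\dfrac{1-\left|\frac{x_0}{1-t}\right|^2}{(1-x_0)^2-t^2}\right)^{\alpha} & \text{if } 2/3<\alpha<1,\ 0<t<\frac{3\alpha-2}{4\alpha-2}.\end{cases}$$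
   Context: $\mathbb D$ is the open unit disc of $\mathbb C$. For $0<\alpha<1$, the Korenblum space is $H^\infty_\alpha=\{f \text{ analytic on } \mathbb D: \|f\|_{H^\infty_\alpha}=\sup_{z\in\mathbb D}(1-|z|^2)^\alpha|f(z)|<\infty\}$, and $\|T\|_{H^\infty_\alpha\to H^\infty_\alpha}$ denotes the operator norm. *)

theory Defs
  imports "HOL-Analysis.Analysis"
begin

text \<open>Korenblum (growth) space on the unit disc. Functions are total on \<complex>;
only their values on the open unit disc matter.\<close>

definition korenblum_norm :: "real \<Rightarrow> (complex \<Rightarrow> complex) \<Rightarrow> real" where
  "korenblum_norm \<alpha> f = (SUP z\<in>ball 0 1. (1 - (cmod z)^2) powr \<alpha> * cmod (f z))"

definition in_korenblum :: "real \<Rightarrow> (complex \<Rightarrow> complex) \<Rightarrow> bool" where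
  "in_korenblum \<alpha> f \<longleftrightarrow> f holomorphic_on ball 0 1 \<and>
     bdd_above ((\<lambda>z. (1 - (cmod z)^2) powr \<alpha> * cmod (f z)) ` ball 0 1)"

definition korenblum_op_norm :: "real \<Rightarrow> ((complex \<Rightarrow> complex) \<Rightarrow> (complex \<Rightarrow> complex)) \<Rightarrow> real" where
  "korenblum_op_norm \<alpha> T =
     Sup {korenblum_norm \<alpha> (T f) | f. in_korenblum \<alpha> f \<and> korenblum_norm \<alpha> f \<le> 1}"

definition wcomp_T :: "real \<Rightarrow> (complex \<Rightarrow> complex) \<Rightarrow> (complex \<Rightarrow> complex)" where
  "wcomp_T t f = (\<lambda>z. (1 / ((of_real t - 1) * z + 1)) * f (of_real t / ((of_real t - 1) * z + 1)))"

end

theory Submission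
  imports Defs
begin

text \<open>
  For f in the unit ball of the Korenblum space, |f(p)| \<le> (1 - |p|^2)^(-a). With
  w = 1 - (1 - t) z one has T_t f(z) = f(t/w) / w, and since |w| \<ge> Re w = 1 - (1 - t) Re z,
  the weighted value (1 - |z|^2)^a |T_t f(z)| is bounded by a weight G(Re z) (wcomp_weight)
  depending only on the real part of z. The normalised kernels
  f_b(z) = (1 - b^2)^a (1 - b z)^(-2a) lie in the unit ball, and b = t / (1 - (1 - t) x) gives
  equality at z = x; so the operator norm is the supremum of G over (-1, 1). The logarithmic
  derivative of G at x has the sign of a quadratic P((1 - t) x) (critical_poly), and the case
  distinction of the theorem is the sign of P(1 - t). If P(1 - t) \<ge> 0, G increases on (-1, 1)
  and the norm is its limit at 1; otherwise G is maximal at x0 / (1 - t), where x0 is the root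
  of P inside (t - 1, 1 - t).
\<close>

definition korenblum_kernel :: "real \<Rightarrow> real \<Rightarrow> complex \<Rightarrow> complex" where
  "korenblum_kernel a b z = of_real ((1 - b^2) powr a) / (1 - of_real b * z) powr of_real (2*a)"

lemma Re_one_minus_real_mult_pos:
  assumes "\<bar>b\<bar> < 1" and "cmod z < 1"
  shows "0 < Re (1 - of_real b * z)"
proof -
  have "\<bar>b\<bar> * \<bar>Re z\<bar> \<le> \<bar>b\<bar>"
    using abs_Re_le_cmod[of z] assms(2) by (simp add: mult_left_le)
  then have "\<bar>b * Re z\<bar> < 1"
    using assms(1) by (simp add: abs_mult)
  then show ?thesis by simp
qed

lemma cmod_one_minus_real_mult_sq:
  "cmod (1 - of_real b * z) ^ 2 = (1 - cmod z ^ 2) * (1 - b^2) + cmod (z - of_real b) ^ 2"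
  unfolding cmod_power2 by (simp add: power2_eq_square algebra_simps)

lemma holomorphic_korenblum_kernel:
  assumes "\<bar>b\<bar> < 1"
  shows "korenblum_kernel a b holomorphic_on ball 0 1"
proof -
  have Re: "0 < Re (1 - of_real b * z)" if "z \<in> ball 0 1" for z
    using Re_one_minus_real_mult_pos[OF assms] that by simp
  show ?thesis
    unfolding korenblum_kernel_def
  proof (intro holomorphic_on_divide holomorphic_on_const holomorphic_on_powr holomorphic_intros)
    fix z :: complex
    assume "z \<in> ball 0 1"
    with Re have "0 < Re (1 - of_real b * z)"
      by blast
    then show "1 - of_real b * z \<notin> \<real>\<^sub>\<le>\<^sub>0"
      by (simp add: complex_nonpos_Reals_iff)
    from \<open>0 < Re (1 - of_real b * z)\<close> have "1 - of_real b * z \<noteq> 0"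
      by (metis less_irrefl zero_complex.sel(1))
    then show "(1 - of_real b * z) powr of_real (2 * a) \<noteq> 0"
      by simp
  qed
qed

lemma norm_korenblum_kernel:
  "cmod (korenblum_kernel a b z) = (1 - b^2) powr a / cmod (1 - of_real b * z) powr (2*a)"
proof -
  have "cmod ((1 - of_real b * z) powr of_real (2*a)) = cmod (1 - of_real b * z) powr (2*a)"
    by (subst norm_powr_real_powr') auto
  then show ?thesis
    unfolding korenblum_kernel_def by (simp add: norm_divide)
qed

lemma korenblum_kernel_weighted_le_1:
  assumes "0 \<le> a" and b: "\<bar>b\<bar> < 1" and z: "cmod z < 1"
  shows "(1 - cmod z ^ 2) powr a * cmod (korenblum_kernel a b z) \<le> 1"
proof -
  define N where "N = cmod (1 - of_real b * z)"
  have "0 < N"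
    using Re_one_minus_real_mult_pos[OF b z] complex_Re_le_cmod unfolding N_def
    by (rule less_le_trans)
  have z2: "0 \<le> 1 - cmod z ^ 2"
    using z by (simp add: abs_square_le_1 less_imp_le)
  have b2: "0 \<le> 1 - b^2"
    using b by (simp add: abs_square_le_1 less_imp_le)
  have "(1 - cmod z ^ 2) * (1 - b^2) \<le> N^2"
    unfolding N_def cmod_one_minus_real_mult_sq by simp
  then have "((1 - cmod z ^ 2) * (1 - b^2)) powr a \<le> (N^2) powr a"
    using z2 b2 assms(1) by (intro powr_mono2) auto
  also have "(N^2) powr a = N powr (2*a)"
    using \<open>0 < N\<close> by (simp add: powr_powr flip: powr_numeral)
  finally show ?thesis
    using \<open>0 < N\<close> z2 b2
    by (simp add: norm_korenblum_kernel N_def[symmetric] powr_mult divide_simps)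
qed

lemma korenblum_kernel_in_unit_ball:
  assumes "0 \<le> a" and "\<bar>b\<bar> < 1"
  shows "in_korenblum a (korenblum_kernel a b)" and "korenblum_norm a (korenblum_kernel a b) \<le> 1"
  using korenblum_kernel_weighted_le_1[OF assms] holomorphic_korenblum_kernel[OF assms(2)]
  unfolding in_korenblum_def korenblum_norm_def by (auto intro!: bdd_aboveI2 cSUP_least)

lemma norm_korenblum_kernel_self:
  assumes "\<bar>b\<bar> < 1"
  shows "cmod (korenblum_kernel a b (of_real b)) = 1 / (1 - b^2) powr a"
proof -
  have "0 < 1 - b^2"
    using assms by (simp add: abs_square_less_1)
  moreover have "1 - of_real b * of_real b = (of_real (1 - b^2) :: complex)"
    by (simp add: power2_eq_square)
  ultimately have "cmod (1 - of_real b * of_real b :: complex) = 1 - b^2"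
    by (metis abs_of_pos norm_of_real)
  moreover have "(1 - b^2) powr (2*a) = (1 - b^2) powr a * (1 - b^2) powr a"
    by (simp add: powr_add[symmetric])
  ultimately show ?thesis
    using \<open>0 < 1 - b^2\<close> by (simp add: norm_korenblum_kernel)
qed

definition wcomp_weight :: "real \<Rightarrow> real \<Rightarrow> real \<Rightarrow> real" where
  "wcomp_weight a t x = (1 - x^2) powr a / ((1 - (1-t)*x) * (1 - (t / (1 - (1-t)*x))^2) powr a)"

lemma less_one_minus_mult:
  fixes t x :: real
  assumes "t < 1" and "x < 1"
  shows "t < 1 - (1-t)*x"
proof -
  have "0 < (1-t)*(1-x)"
    using assms by simp
  then show ?thesis
    by (simp add: algebra_simps)
qed

lemma mult_one_minus_powr_mono:
  fixes a t C r :: real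
  assumes "0 \<le> a" and "0 < t" and "t < C" and "C \<le> r"
  shows "C * (1 - (t/C)^2) powr a \<le> r * (1 - (t/r)^2) powr a"
proof -
  have "t/r \<le> t/C"
    using assms by (intro divide_left_mono) auto
  then have "(t/r)^2 \<le> (t/C)^2"
    using assms by (intro power_mono) auto
  moreover have "(t/C)^2 < 1"
    using assms by (simp add: abs_square_less_1)
  ultimately have "(1 - (t/C)^2) powr a \<le> (1 - (t/r)^2) powr a"
    using assms(1) by (intro powr_mono2) auto
  then show ?thesis
    using assms by (intro mult_mono) auto
qed

lemma weighted_le_wcomp_weight:
  assumes "0 \<le> a" and "0 < t" and "t < 1" and z: "cmod z < 1" and C: "1 - (1-t) * Re z \<le> r"
  shows "(1 - cmod z ^ 2) powr a / (r * (1 - (t/r)^2) powr a) \<le> wcomp_weight a t (Re z)"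
proof -
  define C where "C = 1 - (1-t) * Re z"
  have "t < C"
    unfolding C_def using assms(3) z abs_Re_le_cmod[of z] by (intro less_one_minus_mult) auto
  have "(1 - cmod z ^ 2) powr a / (r * (1 - (t/r)^2) powr a)
          \<le> (1 - (Re z)^2) powr a / (C * (1 - (t/C)^2) powr a)"
  proof (rule frac_le)
    have "(Re z)^2 \<le> cmod z ^ 2"
      using abs_Re_le_cmod[of z] by (metis abs_ge_zero power_mono power2_abs)
    moreover have "0 \<le> 1 - cmod z ^ 2"
      using z by (simp add: abs_square_le_1 less_imp_le)
    ultimately show "(1 - cmod z ^ 2) powr a \<le> (1 - (Re z)^2) powr a"
      using assms(1) by (intro powr_mono2) auto
    have "(t/C)^2 < 1"
      using \<open>t < C\<close> assms(2) by (simp add: abs_square_less_1)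
    then show "0 < C * (1 - (t/C)^2) powr a"
      using \<open>t < C\<close> assms(2) by simp
    show "C * (1 - (t/C)^2) powr a \<le> r * (1 - (t/r)^2) powr a"
      using mult_one_minus_powr_mono assms(1,2) \<open>t < C\<close> C unfolding C_def .
  qed simp
  also have "\<dots> = wcomp_weight a t (Re z)"
    unfolding wcomp_weight_def C_def ..
  finally show ?thesis .
qed

lemma weighted_norm_wcomp_T_le:
  assumes "0 \<le> a" and "0 < t" and "t < 1"
    and f: "\<And>w. w \<in> ball 0 1 \<Longrightarrow> (1 - cmod w ^ 2) powr a * cmod (f w) \<le> 1"
    and z: "z \<in> ball 0 1"
  shows "(1 - cmod z ^ 2) powr a * cmod (wcomp_T t f z) \<le> wcomp_weight a t (Re z)"
proof -
  define w where "w = 1 - of_real (1-t) * z"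
  define p where "p = of_real t / w"
  define r where "r = cmod w"
  have "1 - (1-t) * Re z \<le> r"
    using complex_Re_le_cmod[of w] unfolding r_def w_def by simp
  moreover have "t < 1 - (1-t) * Re z"
    using assms(3) z abs_Re_le_cmod[of z] by (intro less_one_minus_mult) auto
  ultimately have "t < r"
    by linarith
  have T: "wcomp_T t f z = f p / w"
    unfolding wcomp_T_def p_def w_def by (simp add: algebra_simps)
  have "cmod p = t/r"
    unfolding p_def r_def using assms(2) by (simp add: norm_divide)
  with \<open>t < r\<close> assms(2) have "cmod p < 1" "0 < 1 - (t/r)^2"
    by (simp_all add: abs_square_less_1)
  then have "0 < (1 - (t/r)^2) powr a"
    by simp
  moreover have "(1 - (t/r)^2) powr a * cmod (f p) \<le> 1"
    using f[of p] \<open>cmod p < 1\<close> \<open>cmod p = t/r\<close> by simp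
  ultimately have fp: "cmod (f p) \<le> 1 / (1 - (t/r)^2) powr a"
    by (simp add: le_divide_eq mult.commute)
  have "(1 - cmod z ^ 2) powr a * cmod (wcomp_T t f z) = (1 - cmod z ^ 2) powr a * cmod (f p) / r"
    unfolding T r_def by (simp add: norm_divide)
  also have "\<dots> \<le> (1 - cmod z ^ 2) powr a * (1 / (1 - (t/r)^2) powr a) / r"
    using fp \<open>t < r\<close> assms(2) by (intro divide_right_mono mult_left_mono) auto
  also have "\<dots> = (1 - cmod z ^ 2) powr a / (r * (1 - (t/r)^2) powr a)"
    by simp
  also have "\<dots> \<le> wcomp_weight a t (Re z)"
    using weighted_le_wcomp_weight assms(1-3) z \<open>1 - (1-t) * Re z \<le> r\<close> by simp
  finally show ?thesis .
qed

lemma weighted_norm_wcomp_T_kernel_eq: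
  assumes "0 < t" and "t < 1" and "x < 1"
  shows "(1 - cmod (of_real x :: complex) ^ 2) powr a
           * cmod (wcomp_T t (korenblum_kernel a (t / (1 - (1-t)*x))) (of_real x))
         = wcomp_weight a t x"
proof -
  define C where "C = 1 - (1-t)*x"
  have "t < C"
    unfolding C_def using assms by (intro less_one_minus_mult)
  then have b: "\<bar>t / C\<bar> < 1"
    using assms(1) by simp
  have "(of_real t - 1) * of_real x + 1 = (of_real C :: complex)"
    unfolding C_def by (simp add: algebra_simps)
  then have "wcomp_T t (korenblum_kernel a (t / C)) (of_real x)
               = korenblum_kernel a (t / C) (of_real t / of_real C) / of_real C"
    unfolding wcomp_T_def by simp
  then show ?thesis
    using \<open>t < C\<close> assms(1) norm_korenblum_kernel_self[OF b, unfolded of_real_divide]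
    by (simp add: norm_divide wcomp_weight_def C_def[symmetric])
qed

lemma weighted_le_korenblum_norm:
  assumes "bdd_above ((\<lambda>z. (1 - cmod z ^ 2) powr a * cmod (f z)) ` ball 0 1)" and "z \<in> ball 0 1"
  shows "(1 - cmod z ^ 2) powr a * cmod (f z) \<le> korenblum_norm a f"
  unfolding korenblum_norm_def using assms(2,1) by (rule cSUP_upper)

lemma weighted_norm_wcomp_T_le_SUP:
  assumes "0 \<le> a" and "0 < t" and "t < 1"
    and bdd: "bdd_above (wcomp_weight a t ` {-1<..<1})"
    and f: "in_korenblum a f" "korenblum_norm a f \<le> 1" and z: "z \<in> ball 0 1"
  shows "(1 - cmod z ^ 2) powr a * cmod (wcomp_T t f z) \<le> (SUP x\<in>{-1<..<1}. wcomp_weight a t x)"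
proof -
  have "(1 - cmod w ^ 2) powr a * cmod (f w) \<le> 1" if "w \<in> ball 0 1" for w
    using weighted_le_korenblum_norm[of a f w] f that unfolding in_korenblum_def by linarith
  then have "(1 - cmod z ^ 2) powr a * cmod (wcomp_T t f z) \<le> wcomp_weight a t (Re z)"
    using weighted_norm_wcomp_T_le assms(1-3) z by blast
  also have "\<dots> \<le> (SUP x\<in>{-1<..<1}. wcomp_weight a t x)"
    using z abs_Re_le_cmod[of z] by (intro cSUP_upper bdd) auto
  finally show ?thesis .
qed

lemma korenblum_op_norm_wcomp_T:
  assumes "0 \<le> a" and "0 < t" and "t < 1"
    and bdd: "bdd_above (wcomp_weight a t ` {-1<..<1})"
  shows "korenblum_op_norm a (wcomp_T t) = (SUP x\<in>{-1<..<1}. wcomp_weight a t x)"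
proof -
  define S where
    "S = {korenblum_norm a (wcomp_T t f) |f. in_korenblum a f \<and> korenblum_norm a f \<le> 1}"
  have "Sup S = (SUP x\<in>{-1<..<1}. wcomp_weight a t x)"
  proof (rule cSup_eq_non_empty)
    show "S \<noteq> {}"
      unfolding S_def using korenblum_kernel_in_unit_ball[OF assms(1), of 0] by auto
  next
    fix v
    assume "v \<in> S"
    then obtain f where v: "v = korenblum_norm a (wcomp_T t f)"
      and "in_korenblum a f" and "korenblum_norm a f \<le> 1"
      unfolding S_def by blast
    then show "v \<le> (SUP x\<in>{-1<..<1}. wcomp_weight a t x)"
      unfolding v korenblum_norm_def[of a "wcomp_T t f"]
      by (intro cSUP_least weighted_norm_wcomp_T_le_SUP assms) auto
  next
    fix y
    assume y: "\<And>v. v \<in> S \<Longrightarrow> v \<le> y"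
    show "(SUP x\<in>{-1<..<1}. wcomp_weight a t x) \<le> y"
    proof (rule cSUP_least)
      fix x :: real
      assume x: "x \<in> {-1<..<1}"
      define k where "k = korenblum_kernel a (t / (1 - (1-t)*x))"
      have "t < 1 - (1-t)*x"
        using x assms(3) by (intro less_one_minus_mult) auto
      then have "\<bar>t / (1 - (1-t)*x)\<bar> < 1"
        using assms(2) by simp
      note k = korenblum_kernel_in_unit_ball[OF assms(1) this, folded k_def]
      have "wcomp_weight a t x
              = (1 - cmod (of_real x :: complex) ^ 2) powr a * cmod (wcomp_T t k (of_real x))"
        unfolding k_def using weighted_norm_wcomp_T_kernel_eq assms(2,3) x by simp
      also have "\<dots> \<le> korenblum_norm a (wcomp_T t k)"
      proof (rule weighted_le_korenblum_norm)
        show "bdd_above ((\<lambda>z. (1 - cmod z ^ 2) powr a * cmod (wcomp_T t k z)) ` ball 0 1)"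
          by (rule bdd_aboveI2, rule weighted_norm_wcomp_T_le_SUP[OF assms k])
      qed (use x in auto)
      also have "\<dots> \<le> y"
        using k by (intro y) (auto simp: S_def)
      finally show "wcomp_weight a t x \<le> y" .
    qed simp
  qed
  then show ?thesis
    unfolding korenblum_op_norm_def S_def .
qed

definition wcomp_log_weight :: "real \<Rightarrow> real \<Rightarrow> real \<Rightarrow> real" where
  "wcomp_log_weight a t x =
     a * ln (1+x) - a * ln (1+t-(1-t)*x) + (2*a-1) * ln (1-(1-t)*x) - a * ln (1-t)"

definition critical_poly :: "real \<Rightarrow> real \<Rightarrow> real \<Rightarrow> real" where
  "critical_poly a t u = 2*a*(1-u) - (2*a-1)*(1-(t-u)^2)"

lemma wcomp_weight_eq_exp:
  assumes "0 < t" and "t < 1" and "-1 < x" and "x < 1"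
  shows "wcomp_weight a t x = exp (wcomp_log_weight a t x)"
proof -
  define C where "C = 1-(1-t)*x"
  define B where "B = 1+t-(1-t)*x"
  have "t < C"
    unfolding C_def using assms by (intro less_one_minus_mult)
  have pos: "0 < 1-x" "0 < 1+x" "0 < C" "0 < B" "0 < 1-t"
    using assms \<open>t < C\<close> unfolding B_def C_def by auto
  have "1 - x^2 = (1-x)*(1+x)"
    by (simp add: power2_eq_square algebra_simps)
  moreover have "C^2 - t^2 = (1-t)*(1-x)*B"
    unfolding B_def C_def by (simp add: power2_eq_square algebra_simps)
  then have "1 - (t/C)^2 = (1-t)*(1-x)*B / C^2"
    using pos by (simp add: field_simps)
  ultimately have W: "wcomp_weight a t x = ((1-x)*(1+x)) powr a / (C * ((1-t)*(1-x)*B / C^2) powr a)"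
    unfolding wcomp_weight_def C_def by simp
  have "ln (wcomp_weight a t x)
          = a * (ln (1-x) + ln (1+x)) - (ln C + a * (ln (1-t) + ln (1-x) + ln B - 2 * ln C))"
    unfolding W using pos by (simp add: ln_mult ln_div ln_powr ln_realpow)
  also have "\<dots> = wcomp_log_weight a t x"
    unfolding wcomp_log_weight_def B_def[symmetric] C_def[symmetric] by (simp add: algebra_simps)
  finally have "ln (wcomp_weight a t x) = wcomp_log_weight a t x" .
  moreover have "0 < wcomp_weight a t x"
    unfolding W using pos by simp
  ultimately show ?thesis
    by (metis exp_ln)
qed

lemma wcomp_weight_eq_powr:
  assumes "0 < t" and "t < 1" and "-1 < x" and "x < 1"
  shows "wcomp_weight a t x
           = (1-(1-t)*x) powr (2*a-1) * ((1-x^2) / ((1-(1-t)*x)^2 - t^2)) powr a"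
proof -
  define C where "C = 1-(1-t)*x"
  have "t < C"
    unfolding C_def using assms by (intro less_one_minus_mult)
  then have "0 < C" "0 < C^2 - t^2"
    using assms(1) by (auto simp: power_strict_mono)
  have "0 \<le> 1 - x^2"
    using assms(3,4) by (simp add: abs_square_le_1)
  have "1 - (t/C)^2 = (C^2 - t^2) / C^2"
    using \<open>0 < C\<close> by (simp add: field_simps)
  moreover have "(C^2) powr a = C * C powr (2*a-1)"
    using \<open>0 < C\<close> by (simp add: powr_mult_base powr_powr flip: powr_numeral)
  ultimately show ?thesis
    unfolding wcomp_weight_def C_def[symmetric]
    using \<open>0 < C\<close> \<open>0 < C^2 - t^2\<close> \<open>0 \<le> 1 - x^2\<close>
    by (simp add: powr_divide field_simps)
qed

lemma has_real_derivative_wcomp_log_weight: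
  assumes "0 < t" and "t < 1" and "-1 < x" and "x \<le> 1"
  shows "(wcomp_log_weight a t has_real_derivative
           critical_poly a t ((1-t)*x) / ((1+x) * (1+t-(1-t)*x) * (1-(1-t)*x))) (at x)"
proof -
  define A where "A = 1+x"
  define B where "B = 1+t-(1-t)*x"
  define C where "C = 1-(1-t)*x"
  have "(1-t)*x \<le> 1-t"
    using assms by (simp add: mult_left_le)
  then have pos: "0 < A" "0 < B" "0 < C"
    using assms unfolding A_def B_def C_def by linarith+
  have "(wcomp_log_weight a t has_real_derivative a/A + a*(1-t)/B - (2*a-1)*(1-t)/C) (at x)"
    unfolding wcomp_log_weight_def
    apply (rule derivative_eq_intros refl | use pos in \<open>simp add: A_def B_def C_def\<close>; fail)+
    using pos by (simp add: A_def B_def C_def field_simps)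
  moreover have "a/A + a*(1-t)/B - (2*a-1)*(1-t)/C
                   = (a*B*C + a*(1-t)*A*C - (2*a-1)*(1-t)*A*B) / (A*B*C)"
    using pos by (simp add: field_simps)
  moreover have "a*B*C + a*(1-t)*A*C - (2*a-1)*(1-t)*A*B = critical_poly a t ((1-t)*x)"
    unfolding A_def B_def C_def critical_poly_def by (simp add: power2_eq_square algebra_simps)
  ultimately show ?thesis
    unfolding A_def B_def C_def by simp
qed

lemma critical_poly_at_one_minus: "critical_poly a t (1-t) = t * ((4 - 6*a)*(1-t) + 2*a*t)"
  unfolding critical_poly_def by (simp add: power2_eq_square algebra_simps)

lemma critical_poly_nonneg_iff:
  assumes "0 \<le> a" and "0 < t" and "t < 1"
  shows "(a \<le> 2/3 \<or> (3*a-2)/(4*a-2) \<le> t) \<longleftrightarrow> 0 \<le> critical_poly a t (1-t)"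
proof (cases "a \<le> 2/3")
  case True
  then have "0 \<le> (4 - 6*a)*(1-t) + 2*a*t"
    using assms by (simp add: add_nonneg_nonneg)
  then show ?thesis
    using True assms by (simp add: critical_poly_at_one_minus)
next
  case False
  then have "(3*a-2)/(4*a-2) \<le> t \<longleftrightarrow> 0 \<le> (4 - 6*a)*(1-t) + 2*a*t"
    by (simp add: divide_le_eq algebra_simps, linarith)
  then show ?thesis
    using False assms by (simp add: critical_poly_at_one_minus zero_le_mult_iff)
qed

lemma critical_poly_pos:
  assumes "0 < a" and "a \<le> 1/2" and "0 < t" and "\<bar>u\<bar> \<le> 1-t"
  shows "0 < critical_poly a t u"
proof -
  have "\<bar>t-u\<bar> \<le> 1"
    using assms by auto
  then have "(t-u)^2 \<le> 1"
    by (simp add: abs_square_le_1)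
  then have "0 \<le> (1-2*a)*(1-(t-u)^2)"
    using assms(2) by simp
  moreover have "0 < 2*a*(1-u)"
    using assms by simp
  ultimately show ?thesis
    unfolding critical_poly_def by (simp add: algebra_simps)
qed

lemma critical_poly_antimono:
  assumes "1/2 \<le> a" and "a \<le> 1" and "0 \<le> t"
    and "\<bar>u\<bar> \<le> 1-t" and "\<bar>v\<bar> \<le> 1-t" and "u \<le> v"
  shows "critical_poly a t v \<le> critical_poly a t u"
proof -
  have "(2*a-1)*(-2) \<le> (2*a-1)*((t-u)+(t-v))"
    using assms by (intro mult_left_mono) auto
  then have "0 \<le> 2*a + (2*a-1)*((t-u)+(t-v))"
    using assms(2) by (simp add: algebra_simps)
  moreover have "critical_poly a t u - critical_poly a t v = (v-u) * (2*a + (2*a-1)*((t-u)+(t-v)))"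
    unfolding critical_poly_def by (simp add: power2_eq_square algebra_simps)
  ultimately show ?thesis
    using assms(6) by (metis diff_ge_0_iff_ge zero_le_mult_iff)
qed

lemma critical_poly_discriminant_nonneg:
  fixes a t :: real
  assumes "1/2 \<le> a" and "0 \<le> t"
  shows "0 \<le> 4*a^2*t - 2*a*t + a^2 - 2*a + 1"
proof -
  have "4*a^2*t - 2*a*t + a^2 - 2*a + 1 = (1-a)^2 + 2*a*t*(2*a-1)"
    by (simp add: power2_eq_square algebra_simps)
  then show ?thesis
    using assms by simp
qed

lemma critical_poly_factorization:
  assumes "1/2 < a" and "0 \<le> t"
  defines "r \<equiv> sqrt (4*a^2*t - 2*a*t + a^2 - 2*a + 1)"
  defines "x0 \<equiv> (a + 2*a*t - t - r) / (2*a - 1)"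
  shows "critical_poly a t u = (x0 - u) * ((2*a-1)*(t-u) + a + r)"
proof -
  have "r * r = 4*a^2*t - 2*a*t + a^2 - 2*a + 1"
    unfolding r_def using critical_poly_discriminant_nonneg assms(1,2) by simp
  have "(2*a-1) * x0 = a + 2*a*t - t - r"
    unfolding x0_def using assms(1) by simp
  have "(2*a-1) * ((x0 - u) * ((2*a-1)*(t-u) + a + r))
          = ((2*a-1) * x0 - (2*a-1)*u) * ((2*a-1)*(t-u) + a + r)"
    by (simp add: algebra_simps)
  also have "\<dots> = (a + 2*a*t - t - r - (2*a-1)*u) * ((2*a-1)*(t-u) + a + r)"
    unfolding \<open>(2*a-1) * x0 = a + 2*a*t - t - r\<close> ..
  also have "\<dots> = (2*a-1) * critical_poly a t u"
    using \<open>r * r = 4*a^2*t - 2*a*t + a^2 - 2*a + 1\<close>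
    unfolding critical_poly_def by (simp add: power2_eq_square algebra_simps)
  finally show ?thesis
    using assms(1) by simp
qed

lemma critical_poly_root:
  assumes "1/2 < a" and "a < 1" and "0 < t" and "t < 1" and "critical_poly a t (1-t) < 0"
  defines "x0 \<equiv> (a + 2*a*t - t - sqrt (4*a^2*t - 2*a*t + a^2 - 2*a + 1)) / (2*a - 1)"
  shows "critical_poly a t x0 = 0" and "\<bar>x0\<bar> < 1-t"
proof -
  define r where "r = sqrt (4*a^2*t - 2*a*t + a^2 - 2*a + 1)"
  have "0 \<le> r"
    unfolding r_def using critical_poly_discriminant_nonneg assms(1,3) by simp
  note factor =
    critical_poly_factorization[OF assms(1) less_imp_le[OF assms(3)], folded r_def x0_def]
  show "critical_poly a t x0 = 0"
    using factor[of x0] by simp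
  have "0 < t * (2*a-1)"
    using assms(1,3) by simp
  then have "0 < (2*a-1)*(2*t-1) + a + r"
    using \<open>0 \<le> r\<close> assms(2) by (simp add: algebra_simps)
  with assms(5) factor[of "1-t"] have "x0 < 1-t"
    by (simp add: mult_less_0_iff)
  have "0 < critical_poly a t (t-1)"
    using assms(1,4) by (simp add: critical_poly_def)
  moreover have "0 < (2*a-1)*(t-(t-1)) + a + r"
    using \<open>0 \<le> r\<close> assms(1) by simp
  ultimately have "t-1 < x0"
    using factor[of "t-1"] by (simp add: zero_less_mult_iff)
  with \<open>x0 < 1-t\<close> show "\<bar>x0\<bar> < 1-t"
    by simp
qed

lemma DERIV_le_at_sign_change:
  fixes f f' :: "real \<Rightarrow> real"
  assumes deriv: "\<And>y. l < y \<Longrightarrow> y \<le> u \<Longrightarrow> (f has_real_derivative f' y) (at y)"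
    and up: "\<And>y. l < y \<Longrightarrow> y < m \<Longrightarrow> 0 \<le> f' y"
    and down: "\<And>y. m < y \<Longrightarrow> y < u \<Longrightarrow> f' y \<le> 0"
    and "l < m" and "m \<le> u" and "l < x" and "x \<le> u"
  shows "f x \<le> f m"
proof -
  have cont: "continuous_on {p..q} f" if "l < p" "q \<le> u" for p q
    using that by (intro continuous_at_imp_continuous_on ballI DERIV_isCont[OF deriv]) auto
  show ?thesis
  proof (cases "x \<le> m")
    case True
    show ?thesis
    proof (rule DERIV_nonneg_imp_increasing_open[OF True])
      fix y
      assume "x < y" "y < m"
      then show "\<exists>d. (f has_real_derivative d) (at y) \<and> 0 \<le> d"
        using deriv[of y] up[of y] assms(4-7) by auto
    qed (use cont assms(5,6) in auto)
  next
    case False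
    then have "m \<le> x"
      by simp
    then show ?thesis
    proof (rule DERIV_nonpos_imp_decreasing_open)
      fix y
      assume "m < y" "y < x"
      then show "\<exists>d. (f has_real_derivative d) (at y) \<and> d \<le> 0"
        using deriv[of y] down[of y] assms(4-7) by auto
    qed (use cont assms(4,7) in auto)
  qed
qed

lemma wcomp_log_weight_le_at_sign_change:
  assumes "0 < t" and "t < 1" and "-1 < m" and "m \<le> 1" and "-1 < x" and "x \<le> 1"
    and up: "\<And>y. -1 < y \<Longrightarrow> y < m \<Longrightarrow> 0 \<le> critical_poly a t ((1-t)*y)"
    and down: "\<And>y. m < y \<Longrightarrow> y < 1 \<Longrightarrow> critical_poly a t ((1-t)*y) \<le> 0"
  shows "wcomp_log_weight a t x \<le> wcomp_log_weight a t m"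
proof -
  define D where "D y = (1+y) * (1+t-(1-t)*y) * (1-(1-t)*y)" for y
  have D_pos: "0 < D y" if "-1 < y" "y \<le> 1" for y
  proof -
    have "(1-t)*y \<le> 1-t"
      using that assms(2) by (simp add: mult_left_le)
    then show ?thesis
      unfolding D_def using that assms(1) by simp
  qed
  show ?thesis
  proof (rule DERIV_le_at_sign_change[where f = "wcomp_log_weight a t" and l = "-1" and u = 1
        and f' = "\<lambda>y. critical_poly a t ((1-t)*y) / D y"])
    show "(wcomp_log_weight a t has_real_derivative critical_poly a t ((1-t)*y) / D y) (at y)"
      if "-1 < y" "y \<le> 1" for y
      unfolding D_def using has_real_derivative_wcomp_log_weight assms(1,2) that .
    show "0 \<le> critical_poly a t ((1-t)*y) / D y" if "-1 < y" "y < m" for y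
      using up[OF that] D_pos[of y] that assms(4) by simp
    show "critical_poly a t ((1-t)*y) / D y \<le> 0" if "m < y" "y < 1" for y
      using down[OF that] D_pos[of y] that assms(3) by (simp add: divide_nonpos_pos)
  qed (use assms in auto)
qed

lemma exp_wcomp_log_weight_one:
  assumes "0 < t" and "t < 1"
  shows "exp (wcomp_log_weight a t 1) = t powr (a-1) / (1-t) powr a"
proof -
  have "wcomp_log_weight a t 1 = (a-1) * ln t - a * ln (1-t)"
    unfolding wcomp_log_weight_def using assms by (simp add: ln_mult_pos algebra_simps)
  then show ?thesis
    using assms by (simp add: powr_def exp_diff)
qed

lemma abs_one_minus_mult_le:
  fixes t y :: real
  assumes "t \<le> 1" and "\<bar>y\<bar> \<le> 1"
  shows "\<bar>(1-t)*y\<bar> \<le> 1-t"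
  using assms by (simp add: abs_mult mult_left_le)

lemma critical_poly_nonneg:
  assumes "0 < a" and "a < 1" and "0 < t"
    and crit: "0 \<le> critical_poly a t (1-t)" and u: "\<bar>u\<bar> \<le> 1-t"
  shows "0 \<le> critical_poly a t u"
proof (cases "a \<le> 1/2")
  case True
  then show ?thesis
    using critical_poly_pos[OF assms(1) True assms(3) u] by simp
next
  case False
  then have "critical_poly a t (1-t) \<le> critical_poly a t u"
    using u assms(2,3) by (intro critical_poly_antimono) auto
  with crit show ?thesis
    by linarith
qed

lemma wcomp_weight_le_limit_at_one:
  assumes "0 < a" and "a < 1" and "0 < t" and "t < 1"
    and crit: "0 \<le> critical_poly a t (1-t)" and "-1 < x" and "x < 1"
  shows "wcomp_weight a t x \<le> t powr (a-1) / (1-t) powr a"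
proof -
  have "0 \<le> critical_poly a t ((1-t)*y)" if "-1 < y" "y < 1" for y
    using that assms(4)
    by (intro critical_poly_nonneg[OF assms(1-3) crit] abs_one_minus_mult_le) auto
  then have "wcomp_log_weight a t x \<le> wcomp_log_weight a t 1"
    using assms by (intro wcomp_log_weight_le_at_sign_change) auto
  then show ?thesis
    using assms by (simp add: wcomp_weight_eq_exp flip: exp_wcomp_log_weight_one)
qed

lemma tendsto_wcomp_weight_at_left_one:
  assumes "0 < t" and "t < 1"
  shows "(wcomp_weight a t \<longlongrightarrow> t powr (a-1) / (1-t) powr a) (at_left 1)"
proof -
  have "isCont (wcomp_log_weight a t) 1"
    using assms by (intro DERIV_isCont[OF has_real_derivative_wcomp_log_weight]) auto
  then have "((\<lambda>x. exp (wcomp_log_weight a t x)) \<longlongrightarrow> t powr (a-1) / (1-t) powr a) (at_left 1)"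
    unfolding exp_wcomp_log_weight_one[OF assms, symmetric]
    by (intro tendsto_intros filterlim_at_split[THEN iffD1, THEN conjunct1]) (simp add: isCont_def)
  moreover have "\<forall>\<^sub>F x in at_left 1. exp (wcomp_log_weight a t x) = wcomp_weight a t x"
    using eventually_at_left_real[of "-1" 1, simplified]
    by eventually_elim (use assms wcomp_weight_eq_exp in auto)
  ultimately show ?thesis
    by (rule Lim_transform_eventually)
qed

lemma wcomp_weight_le_at_root:
  assumes "1/2 < a" and "a < 1" and "0 < t" and "t < 1"
    and root: "critical_poly a t ((1-t)*m) = 0" and m: "\<bar>m\<bar> < 1" and x: "-1 < x" "x < 1"
  shows "wcomp_weight a t x \<le> wcomp_weight a t m"
proof -
  have u: "\<bar>(1-t)*y\<bar> \<le> 1-t" if "-1 < y" "y < 1" for y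
    using that assms(4) by (intro abs_one_minus_mult_le) auto
  have antimono: "critical_poly a t u \<le> critical_poly a t v"
    if "\<bar>u\<bar> \<le> 1-t" "\<bar>v\<bar> \<le> 1-t" "v \<le> u" for u v
    using that assms(1-3) by (intro critical_poly_antimono) auto
  have "wcomp_log_weight a t x \<le> wcomp_log_weight a t m"
  proof (rule wcomp_log_weight_le_at_sign_change)
    fix y
    assume "-1 < y" "y < m"
    then have "(1-t)*y \<le> (1-t)*m"
      using assms(4) by (intro mult_left_mono) auto
    then show "0 \<le> critical_poly a t ((1-t)*y)"
      using antimono[of "(1-t)*m" "(1-t)*y"] u root m \<open>-1 < y\<close> \<open>y < m\<close> by simp
  next
    fix y
    assume "m < y" "y < 1"
    then have "(1-t)*m \<le> (1-t)*y"
      using assms(4) by (intro mult_left_mono) auto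
    then show "critical_poly a t ((1-t)*y) \<le> 0"
      using antimono[of "(1-t)*y" "(1-t)*m"] u root m \<open>m < y\<close> \<open>y < 1\<close> by simp
  qed (use x m assms(3,4) in auto)
  then show ?thesis
    using x m assms(3,4) by (simp add: wcomp_weight_eq_exp)
qed

lemma SUP_wcomp_weight_if_critical_poly_nonneg:
  assumes "0 < a" and "a < 1" and "0 < t" and "t < 1"
    and crit: "0 \<le> critical_poly a t (1-t)"
  shows "bdd_above (wcomp_weight a t ` {-1<..<1})"
    and "(SUP x\<in>{-1<..<1}. wcomp_weight a t x) = t powr (a-1) / (1-t) powr a"
proof -
  have le: "wcomp_weight a t x \<le> t powr (a-1) / (1-t) powr a" if "x \<in> {-1<..<1}" for x
    using wcomp_weight_le_limit_at_one assms that by simp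
  then show bdd: "bdd_above (wcomp_weight a t ` {-1<..<1})"
    by (rule bdd_aboveI2)
  show "(SUP x\<in>{-1<..<1}. wcomp_weight a t x) = t powr (a-1) / (1-t) powr a"
  proof (rule antisym)
    show "(SUP x\<in>{-1<..<1}. wcomp_weight a t x) \<le> t powr (a-1) / (1-t) powr a"
      using le by (intro cSUP_least) auto
    have "\<forall>\<^sub>F x in at_left 1. wcomp_weight a t x \<le> (SUP x\<in>{-1<..<1}. wcomp_weight a t x)"
      using eventually_at_left_real[of "-1" 1, simplified]
      by eventually_elim (use bdd in \<open>auto intro: cSUP_upper\<close>)
    then show "t powr (a-1) / (1-t) powr a \<le> (SUP x\<in>{-1<..<1}. wcomp_weight a t x)"
      using tendsto_wcomp_weight_at_left_one[OF assms(3,4)] by (intro tendsto_upperbound) auto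
  qed
qed

lemma SUP_wcomp_weight_if_critical_poly_neg:
  assumes "0 < a" and "a < 1" and "0 < t" and "t < 1"
    and crit: "critical_poly a t (1-t) < 0"
  defines "x0 \<equiv> (a + 2*a*t - t - sqrt (4*a^2*t - 2*a*t + a^2 - 2*a + 1)) / (2*a - 1)"
  shows "bdd_above (wcomp_weight a t ` {-1<..<1})"
    and "(SUP x\<in>{-1<..<1}. wcomp_weight a t x)
           = (1 - x0) powr (2*a - 1) * ((1 - \<bar>x0 / (1 - t)\<bar>^2) / ((1 - x0)^2 - t^2)) powr a"
proof -
  have "1/2 < a"
  proof (rule ccontr)
    assume "\<not> 1/2 < a"
    then have "0 < critical_poly a t (1-t)"
      using assms(1,3,4) by (intro critical_poly_pos) auto
    with crit show False
      by simp
  qed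
  note root = critical_poly_root[OF this assms(2-4) crit, folded x0_def]
  define m where "m = x0 / (1-t)"
  have "(1-t)*m = x0"
    unfolding m_def using assms(4) by simp
  have "\<bar>m\<bar> = \<bar>x0\<bar> / (1-t)"
    unfolding m_def using assms(4) by simp
  then have "\<bar>m\<bar> < 1"
    using root(2) assms(4) by (simp add: divide_less_eq)
  have le: "wcomp_weight a t x \<le> wcomp_weight a t m" if "x \<in> {-1<..<1}" for x
    using wcomp_weight_le_at_root[OF \<open>1/2 < a\<close> assms(2-4) _ \<open>\<bar>m\<bar> < 1\<close>] root(1) that
    unfolding \<open>(1-t)*m = x0\<close> by simp
  then show bdd: "bdd_above (wcomp_weight a t ` {-1<..<1})"
    by (rule bdd_aboveI2)
  have "(SUP x\<in>{-1<..<1}. wcomp_weight a t x) = wcomp_weight a t m"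
    using le bdd \<open>\<bar>m\<bar> < 1\<close> by (intro antisym cSUP_least cSUP_upper) auto
  also have "\<dots> = (1-(1-t)*m) powr (2*a-1) * ((1-m^2) / ((1-(1-t)*m)^2 - t^2)) powr a"
    using assms(3,4) \<open>\<bar>m\<bar> < 1\<close> by (intro wcomp_weight_eq_powr) auto
  also have "m^2 = \<bar>x0 / (1 - t)\<bar>^2"
    unfolding m_def by (rule power2_abs[symmetric])
  finally show "(SUP x\<in>{-1<..<1}. wcomp_weight a t x)
                  = (1 - x0) powr (2*a - 1) * ((1 - \<bar>x0 / (1 - t)\<bar>^2) / ((1 - x0)^2 - t^2)) powr a"
    unfolding \<open>(1-t)*m = x0\<close> .
qed

theorem mainTheorem2:
  fixes \<alpha> t :: real
  assumes "0 < \<alpha>" "\<alpha> < 1" "0 < t" "t < 1"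
  defines "x0 \<equiv> (\<alpha> + 2*\<alpha>*t - t - sqrt (4*\<alpha>^2*t - 2*\<alpha>*t + \<alpha>^2 - 2*\<alpha> + 1)) / (2*\<alpha> - 1)"
  shows "korenblum_op_norm \<alpha> (wcomp_T t) =
    (if \<alpha> \<le> 2/3 \<or> (3*\<alpha> - 2) / (4*\<alpha> - 2) \<le> t
     then t powr (\<alpha> - 1) / (1 - t) powr \<alpha>
     else (1 - x0) powr (2*\<alpha> - 1) *
          ((1 - \<bar>x0 / (1 - t)\<bar>^2) / ((1 - x0)^2 - t^2)) powr \<alpha>)"
proof (cases "0 \<le> critical_poly \<alpha> t (1-t)")
  case True
  note SUP = SUP_wcomp_weight_if_critical_poly_nonneg[OF assms(1-4) True]
  have "\<alpha> \<le> 2/3 \<or> (3*\<alpha> - 2) / (4*\<alpha> - 2) \<le> t"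
    using critical_poly_nonneg_iff assms(1,3,4) True by simp
  then show ?thesis
    using korenblum_op_norm_wcomp_T[OF _ assms(3,4) SUP(1)] SUP(2) assms(1) by simp
next
  case False
  then have neg: "critical_poly \<alpha> t (1-t) < 0"
    by simp
  note SUP = SUP_wcomp_weight_if_critical_poly_neg[OF assms(1-4) neg, folded x0_def]
  have "\<not> (\<alpha> \<le> 2/3 \<or> (3*\<alpha> - 2) / (4*\<alpha> - 2) \<le> t)"
    using critical_poly_nonneg_iff assms(1,3,4) False by simp
  then show ?thesis
    using korenblum_op_norm_wcomp_T[OF _ assms(3,4) SUP(1)] SUP(2) assms(1) by simp
qed

end
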